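(* For $n\ge1$ let \[ \mathbf{M}_n=\begin{bmatrix} \frac{n}{2(2n+1)} & -\frac{3}{2n(2n+1)} & 0 & \frac{3}{2n^{5}}\\ 0 & \frac{n}{2(2n+1)} & -\frac{3}{2n(2n+1)} & \frac{3}{2n^{3}}\\ 0 & 0 & \frac{n}{2(2n+1)} & \frac{3}{2n}\\ 0 & 0 & 0 & 1 \end{bmatrix}. \] Then $\lim_{N\to\infty}\mathbf{M}_1\cdots\mathbf{M}_N$ exists and equals \[ \begin{bmatrix}0&0&0&\zeta(6)+\delta\\0&0&0&\zeta(4)\\0&0&0&\zeta(2)\\0&0&0&1\end{bmatrix},\qquad \delta=9\sum_{n\ge1}\frac{H_{n-1}^{(4)}}{\binom{2n}{n}n^{2}}\ (\approx 0.438668). \] In particular, since $\delta>0$, the identity asserting that this limit equals the matrix with last column $(\zeta(6),\zeta(4),\zeta(2),1)^t$ and all other entries zero is false.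
   Context: $\zeta$ denotes the Riemann zeta function. For integers $n\ge0$ and $p\ge1$, $H_n^{(p)}=\sum_{k=1}^{n}k^{-p}$ (so $H_0^{(p)}=0$). *)

theory Defs
  imports "HOL-Analysis.Analysis"
begin

definition zeta_nat :: "nat \<Rightarrow> real" where
  "zeta_nat s = (\<Sum>k. 1 / (real (k + 1)) ^ s)"

definition Hp :: "nat \<Rightarrow> nat \<Rightarrow> real" where
  "Hp p n = (\<Sum>k=1..n. 1 / (real k) ^ p)"

definition Mmat :: "nat \<Rightarrow> real^4^4" where
  "Mmat n = (let a = real n / (2 * (2 * real n + 1));
                 b = - 3 / (2 * real n * (2 * real n + 1)) in
     vector [vector [a, b, 0, 3 / (2 * real n ^ 5)],
             vector [0, a, b, 3 / (2 * real n ^ 3)],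
             vector [0, 0, a, 3 / (2 * real n)],
             vector [0, 0, 0, 1]])"

fun Mprod :: "nat \<Rightarrow> real^4^4" where
  "Mprod 0 = mat 1"
| "Mprod (Suc N) = Mprod N ** Mmat (Suc N)"

definition delta_term :: "nat \<Rightarrow> real" where
  "delta_term n = Hp 4 (n - 1) / (real ((2 * n) choose n) * (real n)^2)"

definition delta :: real where
  "delta = 9 * (\<Sum>n. delta_term (n + 1))"

end

theory Submission
  imports Defs "HOL-Real_Asymp.Real_Asymp"
begin

text \<open>
  The upper left 3x3 block of \<open>M\<^sub>n\<close> is the matrix of multiplication by the truncated
  power series \<open>q\<^sub>n = a\<^sub>n + b\<^sub>n Y\<close> in \<open>\<real>[Y]/(Y\<^sup>3)\<close>, and matrices of this shape multiply
  like affine maps \<open>w \<mapsto> X w + v\<close> of that ring. Hence \<open>M\<^sub>1\<cdots>M\<^sub>N\<close> is described by the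
  product \<open>Q\<^sub>N = q\<^sub>1\<cdots>q\<^sub>N\<close>, which tends to 0 geometrically, and by the partial sums of
  \<open>\<Sum>\<^sub>n Q\<^sub>n v\<^sub>n\<^sub>+\<^sub>1\<close>, where \<open>v\<^sub>n\<close> is the last column of \<open>M\<^sub>n\<close> read as a truncated series.

  To evaluate that sum, take the WZ pair
  \<open>F(n,k) = c\<^sub>n \<Prod>\<^sub>m\<^sub>\<le>\<^sub>n ((k+m)\<^sup>2 - Y)\<^sup>-\<^sup>1\<close>, \<open>G(n,k) = R(n,k) F(n,k)\<close> with
  \<open>F(n,k) - F(n+1,k) = G(n,k) - G(n,k+1)\<close>. Summing over \<open>k \<ge> 1\<close> and then over \<open>n\<close> gives
  \<open>\<Sum>\<^sub>k 1/(k\<^sup>2 - Y) = \<Sum>\<^sub>n G(n,1)\<close>, and the left side is \<open>\<zeta>(2) + \<zeta>(4) Y + \<zeta>(6) Y\<^sup>2\<close>. The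
  terms \<open>G(n,1)\<close> agree with \<open>Q\<^sub>n v\<^sub>n\<^sub>+\<^sub>1\<close> up to a factor \<open>1 - 3 H\<^sub>n\<^sup>(\<^sup>4\<^sup>) Y\<^sup>2\<close>, because the exact
  factors \<open>(1 - 4Y/m\<^sup>2)/(1 - Y/m\<^sup>2)\<close> are truncated to \<open>1 - 3Y/m\<^sup>2\<close> in \<open>M\<^sub>m\<close>; the resulting
  discrepancies in the coefficient of \<open>Y\<^sup>2\<close> add up to \<open>\<delta>\<close>.
\<close>

section \<open>Truncated power series\<close>

datatype 'a jet = Jet (jet0: 'a) (jet1: 'a) (jet2: 'a)

instantiation jet :: (comm_ring_1) comm_ring_1
begin
definition "0 = Jet 0 0 0"
definition "1 = Jet 1 0 0"
definition "x + y = Jet (jet0 x + jet0 y) (jet1 x + jet1 y) (jet2 x + jet2 y)"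
definition "- x = Jet (- jet0 x) (- jet1 x) (- jet2 x)"
definition "x - y = Jet (jet0 x - jet0 y) (jet1 x - jet1 y) (jet2 x - jet2 y)"
definition "x * y = Jet (jet0 x * jet0 y) (jet0 x * jet1 y + jet1 x * jet0 y)
                        (jet0 x * jet2 y + jet1 x * jet1 y + jet2 x * jet0 y)"
instance
  by standard (auto simp: zero_jet_def one_jet_def plus_jet_def uminus_jet_def minus_jet_def
      times_jet_def algebra_simps intro: jet.expand)
end

lemma jet_simps [simp]:
  "jet0 0 = 0" "jet1 0 = 0" "jet2 0 = 0" "jet0 1 = 1" "jet1 1 = 0" "jet2 1 = 0"
  "jet0 (x + y) = jet0 x + jet0 y" "jet1 (x + y) = jet1 x + jet1 y" "jet2 (x + y) = jet2 x + jet2 y"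
  "jet0 (x - y) = jet0 x - jet0 y" "jet1 (x - y) = jet1 x - jet1 y" "jet2 (x - y) = jet2 x - jet2 y"
  "jet0 (x * y) = jet0 x * jet0 y" "jet1 (x * y) = jet0 x * jet1 y + jet1 x * jet0 y"
  "jet2 (x * y) = jet0 x * jet2 y + jet1 x * jet1 y + jet2 x * jet0 y"
  by (simp_all add: zero_jet_def one_jet_def plus_jet_def minus_jet_def times_jet_def)

lemma jet_eqI: "jet0 x = jet0 y \<Longrightarrow> jet1 x = jet1 y \<Longrightarrow> jet2 x = jet2 y \<Longrightarrow> x = y"
  by (rule jet.expand) simp

definition jet_coeff :: "'a::zero jet \<Rightarrow> nat \<Rightarrow> 'a" where
  "jet_coeff x i = (if i = 0 then jet0 x else if i = 1 then jet1 x else if i = 2 then jet2 x else 0)"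

lemma jet_coeff_0 [simp]: "jet_coeff 0 i = 0"
  by (simp add: jet_coeff_def)

lemma jet_coeff_add [simp]: "jet_coeff (x + y) i = jet_coeff x i + jet_coeff y i"
  and jet_coeff_diff [simp]: "jet_coeff (x - y) i = jet_coeff x i - jet_coeff y i"
  by (simp_all add: jet_coeff_def)

lemma jet_coeff_sum: "jet_coeff (sum f A) i = (\<Sum>a\<in>A. jet_coeff (f a) i)"
  by (induction A rule: infinite_finite_induct) (auto simp: jet_coeff_def)

lemma jet0_prod: "jet0 (prod f A) = (\<Prod>a\<in>A. jet0 (f a))"
  by (induction A rule: infinite_finite_induct) auto

definition jet_const :: "'a::zero \<Rightarrow> 'a jet" where
  "jet_const c = Jet c 0 0"

definition jet_var :: "'a::{zero,one} jet" where
  "jet_var = Jet 0 1 0"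

lemma jet_const_simps [simp]: "jet0 (jet_const c) = c" "jet1 (jet_const c) = 0" "jet2 (jet_const c) = 0"
  by (simp_all add: jet_const_def)

lemma jet_var_simps [simp]: "jet0 jet_var = 0" "jet1 jet_var = 1" "jet2 jet_var = 0"
  by (simp_all add: jet_var_def)

lemma jet_coeff_const_mult [simp]: "jet_coeff (jet_const c * x) i = c * jet_coeff x i"
  by (simp add: jet_coeff_def)

lemma jet_const_0 [simp]: "jet_const 0 = 0"
  and jet_const_1 [simp]: "jet_const 1 = 1"
  by (simp_all add: jet_const_def zero_jet_def one_jet_def)

lemma jet_const_mult: "jet_const a * jet_const b = jet_const (a * b)"
  by (rule jet_eqI) simp_all

lemma jet_coeff_var_sq [simp]: "jet_coeff (jet_var ^ 2) i = (if i = 2 then 1 else 0)"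
  by (simp add: jet_coeff_def power2_eq_square)

lemma one_minus_var_sq_mult:
  "(1 - jet_const a * jet_var ^ 2) * (1 - jet_const b * jet_var ^ 2) = 1 - jet_const (a + b) * jet_var ^ 2"
  by (rule jet_eqI) (simp_all add: power2_eq_square)

lemma jet_coeff_mult_one_minus_var_sq:
  "jet_coeff (x * (1 - jet_const c * jet_var ^ 2)) i = jet_coeff x i - (if i = 2 then c * jet0 x else 0)"
  by (simp add: jet_coeff_def power2_eq_square)

definition jet_dominated :: "'a::linordered_idom \<Rightarrow> 'a jet \<Rightarrow> bool" where
  "jet_dominated s x \<longleftrightarrow> 0 \<le> jet0 x \<and> \<bar>jet1 x\<bar> \<le> s * jet0 x \<and> \<bar>jet2 x\<bar> \<le> s\<^sup>2 * jet0 x"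

lemma jet_dominated_mult:
  assumes "0 \<le> s" "0 \<le> t" "jet_dominated s x" "jet_dominated t y"
  shows "jet_dominated (s + t) (x * y)"
proof -
  obtain a b c d f g where x: "x = Jet a b c" and y: "y = Jet d f g" by (meson jet.exhaust)
  have a: "0 \<le> a" "\<bar>b\<bar> \<le> s * a" "\<bar>c\<bar> \<le> s\<^sup>2 * a"
   and d: "0 \<le> d" "\<bar>f\<bar> \<le> t * d" "\<bar>g\<bar> \<le> t\<^sup>2 * d"
    using assms(3,4) by (auto simp: jet_dominated_def x y)
  have "\<bar>a * f + b * d\<bar> \<le> a * (t * d) + (s * a) * d"
    using a d by (intro abs_triangle_ineq[THEN order_trans] add_mono)
      (auto simp: abs_mult intro: mult_left_mono mult_right_mono)
  moreover have "\<bar>a * g + b * f + c * d\<bar> \<le> a * (t\<^sup>2 * d) + (s * a) * (t * d) + (s\<^sup>2 * a) * d"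
    using a d assms(1,2)
    by (intro abs_triangle_ineq[THEN order_trans] add_mono order_trans[OF abs_triangle_ineq])
      (auto simp: abs_mult intro: mult_left_mono mult_right_mono mult_mono)
  moreover have "0 \<le> s * t * a * d" using assms(1,2) a d by simp
  ultimately show ?thesis
    using a d by (simp add: jet_dominated_def x y power2_eq_square algebra_simps)
qed

lemma jet_dominated_one: "0 \<le> s \<Longrightarrow> jet_dominated s 1"
  by (simp add: jet_dominated_def)

lemma jet_dominated_prod:
  assumes "finite A" "\<And>a. a \<in> A \<Longrightarrow> 0 \<le> s a \<and> jet_dominated (s a) (f a)"
  shows "jet_dominated (\<Sum>a\<in>A. s a) (\<Prod>a\<in>A. f a)"
  using assms
proof (induction A rule: finite_induct)
  case empty
  then show ?case by (simp add: jet_dominated_one)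
next
  case (insert a A)
  then show ?case
    by (simp add: jet_dominated_mult sum_nonneg)
qed

lemma jet_dominated_mono:
  assumes "jet_dominated s x" "0 \<le> s" "s \<le> t"
  shows "jet_dominated t x"
proof -
  have "s * jet0 x \<le> t * jet0 x" "s\<^sup>2 * jet0 x \<le> t\<^sup>2 * jet0 x"
    using assms by (auto simp: jet_dominated_def intro!: mult_right_mono power_mono)
  then show ?thesis
    using assms(1) by (auto simp: jet_dominated_def)
qed

lemma jet_dominated_coeff_le:
  assumes "jet_dominated s x" "1 \<le> s"
  shows "\<bar>jet_coeff x i\<bar> \<le> s\<^sup>2 * jet0 x"
proof -
  have x: "0 \<le> jet0 x" "\<bar>jet1 x\<bar> \<le> s * jet0 x" "\<bar>jet2 x\<bar> \<le> s\<^sup>2 * jet0 x"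
    using assms(1) by (auto simp: jet_dominated_def)
  have "s * 1 \<le> s * s"
    using assms(2) by (intro mult_left_mono) auto
  then have "s \<le> s\<^sup>2"
    by (simp add: power2_eq_square)
  moreover from this assms(2) have "1 \<le> s\<^sup>2"
    by linarith
  ultimately show ?thesis
    using x mult_right_mono[OF _ x(1), of 1 "s\<^sup>2"] mult_right_mono[OF _ x(1), of s "s\<^sup>2"]
    by (auto simp: jet_coeff_def)
qed

lemma sum_inverse_squares_le_2: "(\<Sum>m<n. 1 / (real m + 1)\<^sup>2) \<le> 2"
proof -
  have "(\<Sum>m<n. 1 / (real m + 1)\<^sup>2) \<le> (\<Sum>m<n. 2 * (1 / (real m + 1) - 1 / (real (Suc m) + 1)))"
    by (intro sum_mono) (simp add: divide_simps power2_eq_square)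
  also have "\<dots> = 2 * (1 - 1 / (real n + 1))"
    by (subst sum_distrib_left[symmetric], subst sum_lessThan_telescope') simp
  also have "\<dots> \<le> 2"
    by simp
  finally show ?thesis .
qed

lemma jet_dominated_prod_inverse_squares:
  assumes "0 \<le> c" "\<And>m. m < n \<Longrightarrow> jet_dominated (c / (real m + 1)\<^sup>2) (f m)"
  shows "jet_dominated (2 * c) (\<Prod>m<n. f m)"
proof (rule jet_dominated_mono)
  show "jet_dominated (\<Sum>m<n. c / (real m + 1)\<^sup>2) (\<Prod>m<n. f m)"
    using assms by (intro jet_dominated_prod) auto
  show "0 \<le> (\<Sum>m<n. c / (real m + 1)\<^sup>2)"
    using assms(1) by (intro sum_nonneg) simp
  have "(\<Sum>m<n. c / (real m + 1)\<^sup>2) = c * (\<Sum>m<n. 1 / (real m + 1)\<^sup>2)"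
    by (simp add: sum_distrib_left)
  then show "(\<Sum>m<n. c / (real m + 1)\<^sup>2) \<le> 2 * c"
    using mult_left_mono[OF sum_inverse_squares_le_2 assms(1)] by (simp add: mult.commute)
qed

section \<open>Block triangular matrices\<close>

lemma vector_4 [simp]:
  "(vector [a, b, c, d] :: 'a::zero^4) $ 1 = a" "(vector [a, b, c, d] :: 'a^4) $ 2 = b"
  "(vector [a, b, c, d] :: 'a^4) $ 3 = c" "(vector [a, b, c, d] :: 'a^4) $ 4 = d"
  by (simp_all add: vector_def)

definition jet_matrix :: "'a::{zero,one} jet \<Rightarrow> 'a jet \<Rightarrow> 'a^4^4" where
  "jet_matrix X w = vector [vector [jet0 X, jet1 X, jet2 X, jet2 w],
                            vector [0, jet0 X, jet1 X, jet1 w],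
                            vector [0, 0, jet0 X, jet0 w],
                            vector [0, 0, 0, 1]]"

lemma jet_matrix_mult: "jet_matrix X v ** jet_matrix Y w = jet_matrix (X * Y) (v + X * w)"
  unfolding jet_matrix_def matrix_matrix_mult_def
  by (simp add: vec_eq_iff forall_4 sum_4 algebra_simps)

lemma jet_matrix_one: "mat 1 = jet_matrix 1 0"
  unfolding jet_matrix_def mat_def by (simp add: vec_eq_iff forall_4)

lemma tendsto_jet_matrix:
  fixes X w :: "'b \<Rightarrow> 'a::{zero,one,topological_space} jet"
  assumes "\<And>i. ((\<lambda>n. jet_coeff (X n) i) \<longlongrightarrow> jet_coeff x i) F"
    and "\<And>i. ((\<lambda>n. jet_coeff (w n) i) \<longlongrightarrow> jet_coeff y i) F"
  shows "((\<lambda>n. jet_matrix (X n) (w n)) \<longlongrightarrow> jet_matrix x y) F"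
proof (intro vec_tendstoI)
  have X: "((\<lambda>n. jet0 (X n)) \<longlongrightarrow> jet0 x) F" "((\<lambda>n. jet1 (X n)) \<longlongrightarrow> jet1 x) F"
      "((\<lambda>n. jet2 (X n)) \<longlongrightarrow> jet2 x) F"
    using assms(1)[of 0] assms(1)[of 1] assms(1)[of 2] by (simp_all add: jet_coeff_def)
  have w: "((\<lambda>n. jet0 (w n)) \<longlongrightarrow> jet0 y) F" "((\<lambda>n. jet1 (w n)) \<longlongrightarrow> jet1 y) F"
      "((\<lambda>n. jet2 (w n)) \<longlongrightarrow> jet2 y) F"
    using assms(2)[of 0] assms(2)[of 1] assms(2)[of 2] by (simp_all add: jet_coeff_def)
  fix i j :: 4
  show "((\<lambda>n. jet_matrix (X n) (w n) $ i $ j) \<longlongrightarrow> jet_matrix x y $ i $ j) F"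
    using exhaust_4[of i] exhaust_4[of j] X w by (auto simp: jet_matrix_def)
qed

definition M_block :: "nat \<Rightarrow> real jet" where
  "M_block n = Jet (real n / (2 * (2 * real n + 1))) (- 3 / (2 * real n * (2 * real n + 1))) 0"

definition M_column :: "nat \<Rightarrow> real jet" where
  "M_column n = Jet (3 / (2 * real n)) (3 / (2 * real n ^ 3)) (3 / (2 * real n ^ 5))"

definition block_prod :: "nat \<Rightarrow> real jet" where
  "block_prod n = (\<Prod>m<n. M_block (Suc m))"

lemma Mmat_eq_jet_matrix: "Mmat n = jet_matrix (M_block n) (M_column n)"
  by (simp add: Mmat_def Let_def jet_matrix_def M_block_def M_column_def)

lemma Mprod_eq_jet_matrix: "Mprod N = jet_matrix (block_prod N) (\<Sum>n<N. block_prod n * M_column (Suc n))"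
proof (induction N)
  case 0
  then show ?case
    by (simp add: jet_matrix_one block_prod_def)
next
  case (Suc N)
  then show ?case
    by (simp add: Mmat_eq_jet_matrix jet_matrix_mult block_prod_def)
qed

lemma jet_dominated_M_block:
  assumes "0 < m"
  shows "jet_dominated (3 / real m ^ 2) (M_block m)"
proof -
  have "3 / x ^ 2 * (x / (2 * y)) = 3 / (2 * x * y)" if "0 < x" for x y :: real
    using that by (simp add: power2_eq_square)
  from this[of "real m" "2 * real m + 1"] show ?thesis
    using assms by (simp add: jet_dominated_def M_block_def abs_div)
qed

lemma jet_dominated_block_prod: "jet_dominated 6 (block_prod n)"
proof -
  have "jet_dominated (3 / (real m + 1) ^ 2) (M_block (Suc m))" for m
    using jet_dominated_M_block[of "Suc m"] by (simp add: add.commute)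
  then have "jet_dominated (2 * 3) (block_prod n)"
    unfolding block_prod_def by (intro jet_dominated_prod_inverse_squares) auto
  then show ?thesis
    by simp
qed

lemma jet0_block_prod_le: "jet0 (block_prod n) \<le> (1 / 4) ^ n"
proof -
  have "jet0 (block_prod n) \<le> (\<Prod>m<n. 1 / 4)"
    unfolding block_prod_def jet0_prod by (intro prod_mono) (auto simp: M_block_def field_simps)
  then show ?thesis
    by simp
qed

lemma block_prod_coeff_tendsto_0: "(\<lambda>n. jet_coeff (block_prod n) i) \<longlonglongrightarrow> 0"
proof (rule Lim_null_comparison)
  have "\<bar>jet_coeff (block_prod n) i\<bar> \<le> 6\<^sup>2 * (1 / 4) ^ n" for n
    using jet_dominated_coeff_le[OF jet_dominated_block_prod[of n], where i=i] jet0_block_prod_le[of n]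
    by simp
  then show "\<forall>\<^sub>F n in sequentially. norm (jet_coeff (block_prod n) i) \<le> 6\<^sup>2 * (1 / 4) ^ n"
    by simp
  show "(\<lambda>n. 6\<^sup>2 * (1 / 4 :: real) ^ n) \<longlonglongrightarrow> 0"
    by (intro tendsto_mult_right_zero LIMSEQ_power_zero) simp
qed

lemma central_binomial_Suc: "Suc n * (2 * Suc n choose Suc n) = 2 * (2 * n + 1) * (2 * n choose n)"
  by (metis Suc_eq_plus1 Suc_times_binomial Suc_times_binomial_add add_Suc_right add_Suc_shift mult.assoc mult_2)

lemma jet0_block_prod: "jet0 (block_prod n) = 2 / (real (Suc n) * real (2 * Suc n choose Suc n))"
proof (induction n)
  case 0
  then show ?case
    by (simp add: block_prod_def)
next
  case (Suc n)
  have step: "2 / (a * B) * (a / (2 * c)) = 2 / (d * B')" if "0 < a" "0 < B" "0 < c" "d * B' = 2 * c * B"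
    for a B c d B' :: real
    using that by (simp add: field_simps)
  have "jet0 (block_prod (Suc n)) = jet0 (block_prod n) * (real (Suc n) / (2 * (2 * real (Suc n) + 1)))"
    by (simp add: block_prod_def M_block_def)
  also have "\<dots> = 2 / (real (Suc (Suc n)) * real (2 * Suc (Suc n) choose Suc (Suc n)))"
  proof -
    have "real (Suc (Suc n) * (2 * Suc (Suc n) choose Suc (Suc n))) = real (2 * (2 * Suc n + 1) * (2 * Suc n choose Suc n))"
      by (simp only: central_binomial_Suc)
    then have "real (Suc (Suc n)) * real (2 * Suc (Suc n) choose Suc (Suc n))
        = 2 * (2 * real (Suc n) + 1) * real (2 * Suc n choose Suc n)"
      by (simp only: of_nat_mult of_nat_add of_nat_numeral of_nat_1)
    then show ?thesis
      unfolding Suc.IH by (rule step[rotated 3]) (simp_all del: binomial_Suc_Suc)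
  qed
  finally show ?case .
qed

section \<open>A WZ pair for the zeta values\<close>

definition resolvent :: "nat \<Rightarrow> real jet" where
  "resolvent j = Jet (1 / real j ^ 2) (1 / real j ^ 4) (1 / real j ^ 6)"

lemma resolvent_inverse: "0 < j \<Longrightarrow> resolvent j * (jet_const (real j ^ 2) - jet_var) = 1"
  by (rule jet_eqI) (simp_all add: resolvent_def field_simps)

lemma jet_dominated_resolvent: "0 < j \<Longrightarrow> jet_dominated (1 / real j ^ 2) (resolvent j)"
  by (simp add: jet_dominated_def resolvent_def power2_eq_square field_simps eval_nat_numeral)

definition resolvent_prod :: "nat \<Rightarrow> nat \<Rightarrow> real jet" where
  "resolvent_prod n k = (\<Prod>m\<le>n. resolvent (k + m))"

definition wz_factor :: "nat \<Rightarrow> real jet" where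
  "wz_factor n = Jet ((real n + 1) ^ 3 / (2 * (2 * real n + 1))) (- 2 * (real n + 1) / (2 * real n + 1)) 0"

definition wz_F :: "nat \<Rightarrow> nat \<Rightarrow> real jet" where
  "wz_F n k = (\<Prod>m<n. wz_factor m) * resolvent_prod n k"

definition wz_certificate :: "nat \<Rightarrow> nat \<Rightarrow> real" where
  "wz_certificate n k = (2 * real k + 3 * real n + 1) / (2 * (2 * real n + 1))"

definition wz_G :: "nat \<Rightarrow> nat \<Rightarrow> real jet" where
  "wz_G n k = jet_const (wz_certificate n k) * wz_F n k"

lemma resolvent_prod_Suc_eq_mult:
  assumes "0 < k"
  shows "resolvent_prod n k = resolvent_prod (Suc n) k * (jet_const (real (k + Suc n) ^ 2) - jet_var)"
    and "resolvent_prod n (Suc k) = resolvent_prod (Suc n) k * (jet_const (real k ^ 2) - jet_var)"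
proof -
  have "resolvent_prod (Suc n) k = resolvent_prod n k * resolvent (k + Suc n)"
    by (simp add: resolvent_prod_def)
  then show "resolvent_prod n k = resolvent_prod (Suc n) k * (jet_const (real (k + Suc n) ^ 2) - jet_var)"
    using resolvent_inverse[of "k + Suc n"] by (simp add: mult.assoc)
  have "resolvent_prod (Suc n) k = resolvent k * resolvent_prod n (Suc k)"
    unfolding resolvent_prod_def by (subst prod.atMost_Suc_shift) simp
  then have "resolvent_prod (Suc n) k * (jet_const (real k ^ 2) - jet_var)
      = resolvent_prod n (Suc k) * (resolvent k * (jet_const (real k ^ 2) - jet_var))"
    by (simp only: ac_simps)
  then show "resolvent_prod n (Suc k) = resolvent_prod (Suc n) k * (jet_const (real k ^ 2) - jet_var)"
    using resolvent_inverse[OF assms] by simp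
qed

text \<open>Dividing the WZ equation by \<open>c\<^sub>n \<Prod>\<^sub>m\<^sub>\<le>\<^sub>n\<^sub>+\<^sub>1 ((k+m)\<^sup>2 - Y)\<^sup>-\<^sup>1\<close> leaves this identity.\<close>

lemma wz_certificate_identity:
  "(jet_const (real (k + Suc n) ^ 2) - jet_var) - wz_factor n =
    jet_const (wz_certificate n k) * (jet_const (real (k + Suc n) ^ 2) - jet_var)
    - jet_const (wz_certificate n (Suc k)) * (jet_const (real k ^ 2) - jet_var)"
proof -
  have "0 < 2 * real n + 1"
    by simp
  then show ?thesis
    by (intro jet_eqI) (simp_all add: wz_factor_def wz_certificate_def divide_simps,
        simp_all add: algebra_simps power2_eq_square power3_eq_cube)
qed

lemma wz_pair:
  assumes "0 < k"
  shows "wz_F n k - wz_F (Suc n) k = wz_G n k - wz_G n (Suc k)"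
proof -
  let ?c = "\<Prod>m<n. wz_factor m" and ?P = "resolvent_prod (Suc n) k"
  let ?A = "jet_const (real (k + Suc n) ^ 2) - jet_var" and ?B = "jet_const (real k ^ 2) - jet_var"
  note shift = resolvent_prod_Suc_eq_mult[OF assms, of n]
  have "wz_F n k - wz_F (Suc n) k = ?c * ?P * (?A - wz_factor n)"
    unfolding wz_F_def shift(1) by (simp add: algebra_simps)
  also have "\<dots> = ?c * ?P * (jet_const (wz_certificate n k) * ?A - jet_const (wz_certificate n (Suc k)) * ?B)"
    by (simp only: wz_certificate_identity)
  also have "\<dots> = wz_G n k - wz_G n (Suc k)"
    unfolding wz_G_def wz_F_def shift by (simp add: algebra_simps)
  finally show ?thesis .
qed

lemma wz_F_Suc: "wz_F (Suc n) k = wz_F n k * wz_factor n * resolvent (k + Suc n)"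
  by (simp add: wz_F_def resolvent_prod_def ac_simps)

lemma jet_dominated_wz_factor: "jet_dominated (4 / (real n + 1) ^ 2) (wz_factor n)"
proof -
  have cancel: "4 / x ^ 2 * (x ^ 3 / (2 * y)) = 2 * x / y" if "0 < x" for x y :: real
    using that by (simp add: power2_eq_square power3_eq_cube)
  have "4 / (real n + 1) ^ 2 * ((real n + 1) ^ 3 / (2 * (2 * real n + 1))) = 2 * (real n + 1) / (2 * real n + 1)"
    by (rule cancel) simp
  then show ?thesis
    by (simp add: jet_dominated_def wz_factor_def add.commute)
qed

lemma jet_dominated_wz_F:
  assumes "0 < k"
  shows "jet_dominated 10 (wz_F n k)"
proof -
  have "jet_dominated (2 * 4) (\<Prod>m<n. wz_factor m)"
    by (intro jet_dominated_prod_inverse_squares jet_dominated_wz_factor) simp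
  moreover have "jet_dominated (2 * 1) (resolvent_prod n k)"
    unfolding resolvent_prod_def lessThan_Suc_atMost[symmetric]
  proof (intro jet_dominated_prod_inverse_squares jet_dominated_mono[OF jet_dominated_resolvent])
    fix m
    show "1 / real (k + m) ^ 2 \<le> 1 / (real m + 1) ^ 2"
      using assms by (intro divide_left_mono power_mono) auto
  qed (use assms in auto)
  ultimately show ?thesis
    using jet_dominated_mult[of 8 2] unfolding wz_F_def by simp
qed

lemma jet0_wz_F_le:
  assumes "0 < k"
  shows "jet0 (wz_F n k) \<le> (1 / 2) ^ n / real k ^ 2"
proof -
  have factor_le: "(real m + 1) ^ 3 / (2 * (2 * real m + 1)) * (1 / real (k + Suc m) ^ 2) \<le> 1 / 2" for m
  proof -
    have "(real m + 1) ^ 3 = (real m + 1) * (real m + 1) ^ 2"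
      by (simp add: power3_eq_cube power2_eq_square)
    also have "\<dots> \<le> (2 * real m + 1) * real (k + Suc m) ^ 2"
      using assms by (intro mult_mono power_mono) auto
    finally have "(real m + 1) ^ 3 \<le> (2 * real m + 1) * real (k + Suc m) ^ 2" .
    moreover have frac: "a / (2 * b) * (1 / c) \<le> 1 / 2" if "0 < b" "0 < c" "a \<le> b * c" for a b c :: real
      using that by (simp add: field_simps)
    ultimately show ?thesis
      using assms by (intro frac) auto
  qed
  have "jet0 (wz_F n k) = 1 / real k ^ 2 *
      ((\<Prod>m<n. (real m + 1) ^ 3 / (2 * (2 * real m + 1))) * (\<Prod>m<n. 1 / real (k + Suc m) ^ 2))"
    unfolding wz_F_def resolvent_prod_def
    by (simp add: jet0_prod prod.atMost_shift wz_factor_def resolvent_def ac_simps)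
  also have "\<dots> = 1 / real k ^ 2 *
      (\<Prod>m<n. (real m + 1) ^ 3 / (2 * (2 * real m + 1)) * (1 / real (k + Suc m) ^ 2))"
    by (simp only: prod.distrib)
  also have "\<dots> \<le> 1 / real k ^ 2 * (\<Prod>m<n. 1 / 2)"
    by (intro mult_left_mono prod_mono conjI factor_le) auto
  finally show ?thesis
    by simp
qed

lemma wz_F_coeff_le:
  assumes "0 < k"
  shows "\<bar>jet_coeff (wz_F n k) i\<bar> \<le> 100 * (1 / 2) ^ n / real k ^ 2"
proof -
  have "\<bar>jet_coeff (wz_F n k) i\<bar> \<le> 10\<^sup>2 * jet0 (wz_F n k)"
    using jet_dominated_wz_F[OF assms] by (rule jet_dominated_coeff_le) simp
  also have "\<dots> \<le> 10\<^sup>2 * ((1 / 2) ^ n / real k ^ 2)"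
    using jet0_wz_F_le[OF assms] by (rule mult_left_mono) simp
  finally show ?thesis
    by simp
qed

lemma wz_G_coeff_tendsto_0: "(\<lambda>k. jet_coeff (wz_G n k) i) \<longlonglongrightarrow> 0"
proof (rule Lim_null_comparison)
  have "\<bar>jet_coeff (wz_G n k) i\<bar> \<le> (real k + 1) * (100 / real k ^ 2)" if "0 < k" for k
  proof -
    have "0 \<le> wz_certificate n k" "wz_certificate n k \<le> real k + 1"
      by (simp_all add: wz_certificate_def field_simps)
    then have "\<bar>jet_coeff (wz_G n k) i\<bar> \<le> (real k + 1) * (100 * (1 / 2) ^ n / real k ^ 2)"
      unfolding wz_G_def jet_coeff_const_mult abs_mult
      by (intro mult_mono wz_F_coeff_le that) auto
    also have "\<dots> \<le> (real k + 1) * (100 / real k ^ 2)"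
      by (intro mult_left_mono divide_right_mono) (auto simp: power_le_one)
    finally show ?thesis .
  qed
  then show "\<forall>\<^sub>F k in sequentially. norm (jet_coeff (wz_G n k) i) \<le> (real k + 1) * (100 / real k ^ 2)"
    by (auto intro: eventually_sequentiallyI[of 1])
  show "(\<lambda>k. (real k + 1) * (100 / real k ^ 2)) \<longlonglongrightarrow> 0"
    by real_asymp
qed

lemma summable_inverse_squares_Suc: "summable (\<lambda>k. 1 / real (Suc k) ^ 2)"
proof -
  have "summable (\<lambda>k. 1 / real k ^ 2)"
    using inverse_power_summable[of 2, where 'a=real] by (simp add: divide_inverse)
  then show ?thesis
    by (rule summable_Suc_iff[THEN iffD2])
qed

lemma wz_row_coeff_le: "norm (jet_coeff (wz_F n (Suc k)) i) \<le> 100 * (1 / 2) ^ n * (1 / real (Suc k) ^ 2)"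
  using wz_F_coeff_le[of "Suc k" n i] by simp

definition wz_row_sum :: "nat \<Rightarrow> nat \<Rightarrow> real" where
  "wz_row_sum i n = (\<Sum>k. jet_coeff (wz_F n (Suc k)) i)"

lemma summable_wz_row: "summable (\<lambda>k. jet_coeff (wz_F n (Suc k)) i)"
  by (rule summable_comparison_test'[OF summable_mult[OF summable_inverse_squares_Suc] wz_row_coeff_le])

lemma wz_row_sum_tendsto_0: "(\<lambda>n. wz_row_sum i n) \<longlonglongrightarrow> 0"
proof (rule Lim_null_comparison)
  let ?S = "\<Sum>k. 1 / real (Suc k) ^ 2"
  have "norm (wz_row_sum i n) \<le> 100 * (1 / 2) ^ n * ?S" for n
    unfolding wz_row_sum_def suminf_mult[OF summable_inverse_squares_Suc, symmetric]
    by (rule norm_suminf_le[OF wz_row_coeff_le summable_mult[OF summable_inverse_squares_Suc]])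
  then show "\<forall>\<^sub>F n in sequentially. norm (wz_row_sum i n) \<le> 100 * (1 / 2) ^ n * ?S"
    by simp
  show "(\<lambda>n. 100 * (1 / 2) ^ n * ?S) \<longlonglongrightarrow> 0"
    by (intro tendsto_mult_left_zero tendsto_mult_right_zero LIMSEQ_power_zero) simp
qed

lemma wz_row_sum_diff: "wz_row_sum i n - wz_row_sum i (Suc n) = jet_coeff (wz_G n 1) i"
proof -
  have "(\<lambda>k. jet_coeff (wz_G n (Suc k)) i - jet_coeff (wz_G n (Suc (Suc k))) i)
      sums (jet_coeff (wz_G n (Suc 0)) i - 0)"
    using LIMSEQ_Suc[OF wz_G_coeff_tendsto_0[of n i]] by (rule telescope_sums')
  moreover have "(\<lambda>k. jet_coeff (wz_F n (Suc k)) i - jet_coeff (wz_F (Suc n) (Suc k)) i)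
      sums (wz_row_sum i n - wz_row_sum i (Suc n))"
    unfolding wz_row_sum_def by (intro sums_diff summable_sums summable_wz_row)
  ultimately show ?thesis
    using wz_pair[of "Suc _" n] by (simp flip: jet_coeff_diff add: sums_iff)
qed

lemma wz_row_sum_telescope: "(\<Sum>n<N. jet_coeff (wz_G n 1) i) = wz_row_sum i 0 - wz_row_sum i N"
  unfolding wz_row_sum_diff[symmetric] by (rule sum_lessThan_telescope')

definition zeta_jet :: "real jet" where
  "zeta_jet = Jet (zeta_nat 2) (zeta_nat 4) (zeta_nat 6)"

lemma wz_row_sum_0: "wz_row_sum i 0 = jet_coeff zeta_jet i"
  by (simp add: wz_row_sum_def wz_F_def resolvent_prod_def resolvent_def zeta_jet_def zeta_nat_def
      jet_coeff_def)

section \<open>The last column\<close>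

lemma resolvent_wz_factor_eq:
  "jet_const (2 * real n + 1) * resolvent (Suc n) * wz_factor n =
    jet_const (2 * real n + 3) * M_block (Suc n) * (1 - jet_const (3 / real (Suc n) ^ 4) * jet_var ^ 2)"
proof -
  have "jet_const y * Jet (1 / x ^ 2) (1 / x ^ 4) (1 / x ^ 6) * Jet (x ^ 3 / (2 * y)) (- 2 * x / y) 0
      = jet_const z * Jet (x / (2 * z)) (- 3 / (2 * x * z)) 0 * (1 - jet_const (3 / x ^ 4) * jet_var ^ 2)"
    if "x \<noteq> 0" "y \<noteq> 0" "z \<noteq> 0" for x y z :: real
    using that by (intro jet_eqI) (simp_all add: power2_eq_square field_simps eval_nat_numeral)
  from this[of "real n + 1" "2 * real n + 1" "2 * real n + 3"] show ?thesis
    by (simp add: resolvent_def wz_factor_def M_block_def algebra_simps)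
qed

lemma wz_F_1:
  "wz_F n 1 = jet_const (2 * real n + 1) * block_prod n * (1 - jet_const (3 * Hp 4 n) * jet_var ^ 2)
    * resolvent (Suc n)"
proof (induction n)
  case 0
  then show ?case
    by (simp add: wz_F_def resolvent_prod_def block_prod_def Hp_def)
next
  case (Suc n)
  have "wz_F (Suc n) 1 = block_prod n * (1 - jet_const (3 * Hp 4 n) * jet_var ^ 2)
      * (jet_const (2 * real n + 1) * resolvent (Suc n) * wz_factor n) * resolvent (Suc (Suc n))"
    unfolding wz_F_Suc Suc.IH by (simp add: ac_simps)
  also have "\<dots> = block_prod n * (1 - jet_const (3 * Hp 4 n) * jet_var ^ 2)
      * (jet_const (2 * real n + 3) * M_block (Suc n) * (1 - jet_const (3 / real (Suc n) ^ 4) * jet_var ^ 2))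
      * resolvent (Suc (Suc n))"
    by (simp only: resolvent_wz_factor_eq)
  also have "\<dots> = jet_const (2 * real n + 3) * (block_prod n * M_block (Suc n))
      * ((1 - jet_const (3 * Hp 4 n) * jet_var ^ 2) * (1 - jet_const (3 / real (Suc n) ^ 4) * jet_var ^ 2))
      * resolvent (Suc (Suc n))"
    by (simp only: ac_simps)
  also have "\<dots> = jet_const (2 * real (Suc n) + 1) * block_prod (Suc n)
      * (1 - jet_const (3 * Hp 4 (Suc n)) * jet_var ^ 2) * resolvent (Suc (Suc n))"
  proof -
    have "3 * Hp 4 n + 3 / real (Suc n) ^ 4 = 3 * Hp 4 (Suc n)" "2 * real n + 3 = 2 * real (Suc n) + 1"
      by (simp_all add: Hp_def)
    then show ?thesis
      by (simp only: one_minus_var_sq_mult block_prod_def prod.lessThan_Suc)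
  qed
  finally show ?case .
qed

lemma wz_G_1: "wz_G n 1 = block_prod n * M_column (Suc n) * (1 - jet_const (3 * Hp 4 n) * jet_var ^ 2)"
proof -
  have scale: "jet_const (3 * x / 2) * Jet (1 / x ^ 2) (1 / x ^ 4) (1 / x ^ 6)
      = Jet (3 / (2 * x)) (3 / (2 * x ^ 3)) (3 / (2 * x ^ 5))" if "x \<noteq> 0" for x :: real
    using that by (intro jet_eqI) (simp_all add: field_simps eval_nat_numeral)
  have "wz_certificate n 1 * (2 * real n + 1) = 3 * real (Suc n) / 2"
    by (simp add: wz_certificate_def field_simps)
  then have column: "jet_const (wz_certificate n 1) * jet_const (2 * real n + 1) * resolvent (Suc n) = M_column (Suc n)"
    unfolding jet_const_mult resolvent_def M_column_def by (rule ssubst) (rule scale, simp)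
  have "wz_G n 1 = block_prod n * (jet_const (wz_certificate n 1) * jet_const (2 * real n + 1) * resolvent (Suc n))
      * (1 - jet_const (3 * Hp 4 n) * jet_var ^ 2)"
    unfolding wz_G_def wz_F_1 by (simp only: ac_simps)
  then show ?thesis
    unfolding column .
qed

lemma delta_term_Suc_eq:
  "9 * delta_term (Suc n) = 3 * Hp 4 n * jet0 (block_prod n) * jet0 (M_column (Suc n))"
proof -
  have cancel: "9 * (H / (B * x ^ 2)) = 3 * H * (2 / (x * B)) * (3 / (2 * x))" if "x \<noteq> 0" "B \<noteq> 0"
    for H B x :: real
    using that by (simp add: field_simps power2_eq_square)
  show ?thesis
    unfolding delta_term_def diff_Suc_1 jet0_block_prod M_column_def jet.sel
    by (rule cancel) (simp_all del: binomial_Suc_Suc)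
qed

lemma jet_coeff_column_term:
  "jet_coeff (block_prod n * M_column (Suc n)) i = jet_coeff (wz_G n 1) i + (if i = 2 then 9 * delta_term (Suc n) else 0)"
  unfolding wz_G_1 jet_coeff_mult_one_minus_var_sq delta_term_Suc_eq by simp

lemma delta_term_Suc_bounds: "0 \<le> delta_term (Suc n) \<and> delta_term (Suc n) \<le> (1 / 4) ^ n"
proof -
  have H: "0 \<le> Hp 4 n" "Hp 4 n \<le> real (Suc n)"
    unfolding Hp_def using sum_bounded_above[of "{1..n}" "\<lambda>k. 1 / real k ^ 4" 1]
    by (auto intro: sum_nonneg)
  have Q: "0 \<le> jet0 (block_prod n)"
    using jet_dominated_block_prod by (simp add: jet_dominated_def)
  have "9 * delta_term (Suc n) = 3 * Hp 4 n * jet0 (block_prod n) * (3 / (2 * real (Suc n)))"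
    by (simp add: delta_term_Suc_eq M_column_def)
  also have "\<dots> \<le> 3 * real (Suc n) * jet0 (block_prod n) * (3 / (2 * real (Suc n)))"
    using H Q by (intro mult_right_mono) auto
  also have "\<dots> = 9 / 2 * jet0 (block_prod n)"
    by (simp add: field_simps del: of_nat_Suc)
  also have "\<dots> \<le> 9 * (1 / 4) ^ n"
    using jet0_block_prod_le[of n] Q by simp
  finally show ?thesis
    using H by (simp add: delta_term_def)
qed

lemma summable_delta_term: "summable (\<lambda>n. delta_term (n + 1))"
  by (rule summable_comparison_test'[OF summable_geometric[of "1 / 4"]]) (use delta_term_Suc_bounds in auto)

lemma delta_pos: "0 < delta"
proof -
  have "delta_term (Suc 1) = 1 / 24"
    by (simp add: delta_term_def Hp_def numeral_eq_Suc)
  then have "0 < (\<Sum>n. delta_term (n + 1))"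
    using summable_delta_term delta_term_Suc_bounds by (intro suminf_pos2[of _ 1]) auto
  then show ?thesis
    by (simp add: delta_def)
qed

lemma column_sum_coeff_tendsto:
  "(\<lambda>N. jet_coeff (\<Sum>n<N. block_prod n * M_column (Suc n)) i)
    \<longlonglongrightarrow> jet_coeff (zeta_jet + jet_const delta * jet_var ^ 2) i"
proof -
  have "jet_coeff (\<Sum>n<N. block_prod n * M_column (Suc n)) i
      = wz_row_sum i 0 - wz_row_sum i N + (if i = 2 then 9 * (\<Sum>n<N. delta_term (n + 1)) else 0)" for N
    unfolding jet_coeff_sum jet_coeff_column_term sum.distrib wz_row_sum_telescope
    by (simp add: sum_distrib_left)
  moreover have "(\<lambda>N. wz_row_sum i 0 - wz_row_sum i N + (if i = 2 then 9 * (\<Sum>n<N. delta_term (n + 1)) else 0))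
      \<longlonglongrightarrow> wz_row_sum i 0 - 0 + (if i = 2 then delta else 0)"
  proof -
    have "(\<lambda>N. wz_row_sum i 0 - wz_row_sum i N) \<longlonglongrightarrow> wz_row_sum i 0 - 0"
      by (intro tendsto_intros wz_row_sum_tendsto_0)
    moreover have "(\<lambda>N. 9 * (\<Sum>n<N. delta_term (n + 1))) \<longlonglongrightarrow> delta"
      unfolding delta_def by (intro tendsto_intros summable_LIMSEQ summable_delta_term)
    ultimately show ?thesis
      by (cases "i = 2") (simp_all add: tendsto_add)
  qed
  ultimately show ?thesis
    by (cases "i = 2") (simp_all add: wz_row_sum_0)
qed

theorem mainTheorem5:
  shows "summable (\<lambda>n. delta_term (n + 1))
    \<and> Mprod \<longlonglongrightarrow>
        (vector [vector [0, 0, 0, zeta_nat 6 + delta],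
                 vector [0, 0, 0, zeta_nat 4],
                 vector [0, 0, 0, zeta_nat 2],
                 vector [0, 0, 0, 1]] :: real^4^4)
    \<and> delta > 0"
proof -
  have "(\<lambda>N. jet_coeff (block_prod N) i) \<longlonglongrightarrow> jet_coeff 0 i" for i
    using block_prod_coeff_tendsto_0 by simp
  then have "Mprod \<longlonglongrightarrow> jet_matrix 0 (zeta_jet + jet_const delta * jet_var ^ 2)"
    unfolding Mprod_eq_jet_matrix[abs_def] by (intro tendsto_jet_matrix column_sum_coeff_tendsto)
  also have "jet_matrix 0 (zeta_jet + jet_const delta * jet_var ^ 2) =
      vector [vector [0, 0, 0, zeta_nat 6 + delta],
              vector [0, 0, 0, zeta_nat 4],
              vector [0, 0, 0, zeta_nat 2],
              vector [0, 0, 0, 1]]"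
    by (simp add: jet_matrix_def zeta_jet_def power2_eq_square)
  finally show ?thesis
    using summable_delta_term delta_pos by blast
qed

end
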